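(* Let $V:\mathbb{R}\to\mathbb{R}$ be convex with $m:=e^{-V}$ a probability density. Let $0<c<C$ and $f\in\mathcal{P}_{c,C}$. Then there exists a constant $A=A(c,C,V)$ depending only on $c$, $C$ and $V$ such that the optimal transport map $T$ from $m$ to $f$ satisfies $|T(x)-x|\le A$ for all $x\in\mathbb{R}$.
   Context: $\mathcal{P}_{c,C}:=\{g\in\mathcal{P}(\mathbb{R}):\ c\,m\le g\le C\,m\}$. The optimal transport map (for quadratic cost) from $m$ to $f$ on $\mathbb{R}$ is the monotone map $T=F_f^{-1}\circ F_m$, where $F_m,F_f$ are the cumulative distribution functions. *)

theory Defs
  imports "HOL-Analysis.Analysis"
begin

definition prob_density :: "(real \<Rightarrow> real) \<Rightarrow> bool" where
  "prob_density g \<longleftrightarrow> g \<in> borel_measurable lborel \<and> (\<forall>x. 0 \<le> g x)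
     \<and> integrable lborel g \<and> integral\<^sup>L lborel g = 1"

definition P_cC :: "real \<Rightarrow> real \<Rightarrow> (real \<Rightarrow> real) \<Rightarrow> (real \<Rightarrow> real) set" where
  "P_cC c C m = {g. prob_density g \<and> (\<forall>x. c * m x \<le> g x \<and> g x \<le> C * m x)}"

definition cdf :: "(real \<Rightarrow> real) \<Rightarrow> real \<Rightarrow> real" where
  "cdf g x = (LINT t:{..x}|lborel. g t)"

definition quantile :: "(real \<Rightarrow> real) \<Rightarrow> real \<Rightarrow> real" where
  "quantile g p = Inf {y. p \<le> cdf g y}"

text \<open>Monotone optimal transport map from m to f: T = F_f^{-1} o F_m.\<close>
definition ot_map :: "(real \<Rightarrow> real) \<Rightarrow> (real \<Rightarrow> real) \<Rightarrow> real \<Rightarrow> real" where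
  "ot_map m f = quantile f \<circ> cdf m"

end

theory Submission
  imports Defs
begin

(* Write m = exp (- V), F and G for its distribution function and tail, and K = max C (1 / c).
   Since c m <= f <= C m, the quantile of f at level F x lies within A of x as soon as every
   interval [y, x] of length at least A has K F y < F x or K G x < G y.  If both fail,
   log-concavity of m (shifting by w - y multiplies m by at least exp (V y - V w) on {..y},
   and symmetrically for the tail) bounds the oscillation of V on [y, x] by ln K.  But
   integrability of m forces V to grow at a linear rate outside some bounded interval [L, R],
   and on an interval meeting [L, R] a bounded V makes the m-mass proportional to the length;
   so intervals of small oscillation have bounded length. *)

definition tail :: "(real \<Rightarrow> real) \<Rightarrow> real \<Rightarrow> real" where
  "tail g x = (LINT t:{x<..}|lborel. g t)"

lemma set_integrable_lborel:
  fixes g :: "real \<Rightarrow> real"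
  assumes "integrable lborel g" "A \<in> sets borel"
  shows "set_integrable lborel A g"
  unfolding set_integrable_def using integrable_mult_indicator[of A lborel g] assms by simp

lemma set_integral_mono_set:
  fixes g :: "real \<Rightarrow> real"
  assumes "integrable lborel g" "\<And>t. 0 \<le> g t" "A \<in> sets borel" "B \<in> sets borel" "A \<subseteq> B"
  shows "(LINT t:A|lborel. g t) \<le> (LINT t:B|lborel. g t)"
  using assms set_integrable_lborel[OF assms(1)] unfolding set_lebesgue_integral_def set_integrable_def
  by (intro integral_mono) (auto split: split_indicator)

lemma set_integral_le_integral:
  fixes g :: "real \<Rightarrow> real"
  assumes "integrable lborel g" "\<And>t. 0 \<le> g t" "A \<in> sets borel"
  shows "(LINT t:A|lborel. g t) \<le> integral\<^sup>L lborel g"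
  using set_integral_mono_set[OF assms(1,2,3), of UNIV]
  by (simp add: set_lebesgue_integral_def)

lemma set_integral_Icc_ge:
  fixes g :: "real \<Rightarrow> real"
  assumes "integrable lborel g" "a \<le> b" "\<And>t. t \<in> {a..b} \<Longrightarrow> B \<le> g t"
  shows "(b - a) * B \<le> (LINT t:{a..b}|lborel. g t)"
proof -
  have "(LINT t:{a..b}|lborel. B) = (b - a) * B"
    using assms(2) by (simp add: set_integral_const)
  moreover have "set_integrable lborel {a..b} (\<lambda>_. B)"
    by (simp add: set_integrable_def integrable_indicator_iff emeasure_lborel_Icc_eq)
  then have "(LINT t:{a..b}|lborel. B) \<le> (LINT t:{a..b}|lborel. g t)"
    by (rule set_integral_mono[OF _ set_integrable_lborel[OF assms(1)]]) (use assms in auto)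
  ultimately show ?thesis by simp
qed

lemma set_integral_nonneg:
  fixes g :: "real \<Rightarrow> real"
  assumes "\<And>t. 0 \<le> g t"
  shows "0 \<le> (LINT t:A|lborel. g t)"
  unfolding set_lebesgue_integral_def using assms
  by (intro Bochner_Integration.integral_nonneg) (simp split: split_indicator)

lemma set_integral_mono_lborel:
  fixes g h :: "real \<Rightarrow> real"
  assumes "integrable lborel g" "integrable lborel h" "\<And>t. g t \<le> h t" "S \<in> sets borel"
  shows "(LINT t:S|lborel. g t) \<le> (LINT t:S|lborel. h t)"
  using assms by (intro set_integral_mono set_integrable_lborel) auto

lemma set_integral_lborel_translate:
  fixes g :: "real \<Rightarrow> real"
  shows "(LINT t:S|lborel. g t) = (LINT t:(\<lambda>t. t + s) -` S|lborel. g (t + s))"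
  unfolding set_lebesgue_integral_def
  using lborel_integral_real_affine[of 1 "\<lambda>t. indicator S t *\<^sub>R g t" s]
  by (simp add: indicator_def add.commute)

lemma cdf_add_tail:
  fixes g :: "real \<Rightarrow> real"
  assumes "integrable lborel g"
  shows "cdf g x + tail g x = integral\<^sup>L lborel g"
proof -
  have "cdf g x + tail g x = (LINT t:{..x} \<union> {x<..}|lborel. g t)"
    unfolding cdf_def tail_def
    by (rule set_integral_Un[symmetric]) (auto intro: set_integrable_lborel assms)
  also have "{..x} \<union> {x<..} = (UNIV :: real set)" by auto
  finally show ?thesis by (simp add: set_lebesgue_integral_def)
qed

lemma convex_on_secant_slope_mono:
  fixes f :: "real \<Rightarrow> real"
  assumes cvx: "convex_on UNIV f" and "p < q" "u < v" "p \<le> u" "q \<le> v"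
  shows "(f q - f p) / (q - p) \<le> (f v - f u) / (v - u)"
proof -
  have slope_sym: "(f a - f b) / (a - b) = (f b - f a) / (b - a)" for a b
    by (metis minus_diff_eq minus_divide_divide)
  have "(f q - f p) / (q - p) \<le> (f v - f p) / (v - p)"
    using convex_on_slope_le(1)[OF cvx, of p v q] assms slope_sym
    by (cases "q = v") auto
  also have "\<dots> \<le> (f v - f u) / (v - u)"
    using convex_on_slope_le(2)[OF cvx, of p v u] assms slope_sym
    by (cases "p = u") auto
  finally show ?thesis .
qed

lemma convex_on_increment_mono:
  fixes f :: "real \<Rightarrow> real"
  assumes cvx: "convex_on UNIV f" and "t \<le> y" "0 \<le> s"
  shows "f (t + s) - f t \<le> f (y + s) - f y"
proof (cases "s = 0")
  case False
  then have "(f (t + s) - f t) / s \<le> (f (y + s) - f y) / s"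
    using convex_on_secant_slope_mono[OF cvx, of t "t + s" y "y + s"] assms by simp
  then show ?thesis
    using assms False by (simp add: divide_right_mono_neg le_divide_eq)
qed simp

lemma integrable_nonneg_exists_less_right:
  fixes g :: "real \<Rightarrow> real"
  assumes int: "integrable lborel g" and nonneg: "\<And>t. 0 \<le> g t" and pos: "0 < g z"
  shows "\<exists>t>z. g t < g z"
proof (rule ccontr)
  assume "\<not> ?thesis"
  then have ge: "g z \<le> g t" if "z \<le> t" for t
    using that by (metis less_eq_real_def not_less)
  define n where "n = integral\<^sup>L lborel g / g z + 1"
  have "n * g z \<le> (LINT t:{z..z + n}|lborel. g t)"
    using set_integral_Icc_ge[OF int, of z "z + n" "g z"] ge pos nonneg
    by (simp add: n_def integral_nonneg)
  also have "\<dots> \<le> integral\<^sup>L lborel g"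
    by (rule set_integral_le_integral[OF int nonneg]) simp
  finally show False
    using pos by (simp add: n_def distrib_right)
qed

lemma integrable_nonneg_exists_less_left:
  fixes g :: "real \<Rightarrow> real"
  assumes int: "integrable lborel g" and nonneg: "\<And>t. 0 \<le> g t" and pos: "0 < g z"
  shows "\<exists>t<z. g t < g z"
proof -
  have "integrable lborel (\<lambda>t. g (- t))"
    using lborel_integrable_real_affine[OF int, of "-1" 0] by simp
  from integrable_nonneg_exists_less_right[OF this, of "- z"] nonneg pos
  obtain t where "- z < t" "g (- t) < g z" by auto
  then show ?thesis by (intro exI[of _ "- t"]) auto
qed

lemma convex_set_integral_Icc_pos:
  fixes V :: "real \<Rightarrow> real"
  assumes cv: "convex_on UNIV V" and int: "integrable lborel (\<lambda>x. exp (- V x))" and "a < b"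
  shows "0 < (LINT t:{a..b}|lborel. exp (- V t))"
proof -
  have "V t \<le> max (V a) (V b)" if "t \<in> {a..b}" for t
    using convex_on_le_max[OF convex_on_subset[OF cv], of a b t] that by auto
  then have "(b - a) * exp (- max (V a) (V b)) \<le> (LINT t:{a..b}|lborel. exp (- V t))"
    using assms by (intro set_integral_Icc_ge[OF int]) auto
  moreover have "0 < (b - a) * exp (- max (V a) (V b))"
    using assms by simp
  ultimately show ?thesis by linarith
qed

lemma convex_cdf_pos:
  fixes V :: "real \<Rightarrow> real"
  assumes cv: "convex_on UNIV V" and int: "integrable lborel (\<lambda>x. exp (- V x))"
  shows "0 < cdf (\<lambda>x. exp (- V x)) y"
  using convex_set_integral_Icc_pos[OF cv int, of "y - 1" y]
    set_integral_mono_set[OF int, of "{y - 1..y}" "{..y}"]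
  unfolding cdf_def by auto

lemma convex_tail_pos:
  fixes V :: "real \<Rightarrow> real"
  assumes cv: "convex_on UNIV V" and int: "integrable lborel (\<lambda>x. exp (- V x))"
  shows "0 < tail (\<lambda>x. exp (- V x)) y"
proof -
  have "{y + 1..y + 2} \<subseteq> {y<..}" by auto
  then show ?thesis
    using convex_set_integral_Icc_pos[OF cv int, of "y + 1" "y + 2"]
      set_integral_mono_set[OF int, of "{y + 1..y + 2}" "{y<..}"]
    unfolding tail_def by auto
qed

lemma convex_cdf_shift_ge:
  fixes V :: "real \<Rightarrow> real"
  assumes cv: "convex_on UNIV V" and int: "integrable lborel (\<lambda>x. exp (- V x))" and "y \<le> w"
  shows "exp (V y - V w) * cdf (\<lambda>x. exp (- V x)) y \<le> cdf (\<lambda>x. exp (- V x)) w"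
proof -
  define s where "s = w - y"
  have "(\<lambda>t. t + s) -` {..w} = {..y}"
    by (auto simp: s_def)
  then have shifted: "cdf (\<lambda>x. exp (- V x)) w = (LINT t:{..y}|lborel. exp (- V (t + s)))"
    unfolding cdf_def by (subst set_integral_lborel_translate[where s = s]) simp
  have int_shifted: "integrable lborel (\<lambda>t. exp (- V (t + s)))"
    using lborel_integrable_real_affine[OF int, of 1 s] by (simp add: add.commute)
  have pointwise: "exp (V y - V w) * exp (- V t) \<le> exp (- V (t + s))" if "t \<le> y" for t
    using convex_on_increment_mono[OF cv that, of s] assms by (simp add: s_def mult_exp_exp)
  have "exp (V y - V w) * cdf (\<lambda>x. exp (- V x)) y
      = (LINT t:{..y}|lborel. exp (V y - V w) * exp (- V t))"
    unfolding cdf_def by simp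
  also have "\<dots> \<le> (LINT t:{..y}|lborel. exp (- V (t + s)))"
    using pointwise int int_shifted
    by (intro set_integral_mono set_integrable_lborel integrable_mult_right) auto
  finally show ?thesis
    using shifted by simp
qed

lemma convex_tail_shift_ge:
  fixes V :: "real \<Rightarrow> real"
  assumes cv: "convex_on UNIV V" and int: "integrable lborel (\<lambda>x. exp (- V x))" and "w \<le> x"
  shows "exp (V x - V w) * tail (\<lambda>x. exp (- V x)) x \<le> tail (\<lambda>x. exp (- V x)) w"
proof -
  define s where "s = w - x"
  have "(\<lambda>t. t + s) -` {w<..} = {x<..}"
    by (auto simp: s_def)
  then have shifted: "tail (\<lambda>x. exp (- V x)) w = (LINT t:{x<..}|lborel. exp (- V (t + s)))"
    unfolding tail_def by (subst set_integral_lborel_translate[where s = s]) simp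
  have int_shifted: "integrable lborel (\<lambda>t. exp (- V (t + s)))"
    using lborel_integrable_real_affine[OF int, of 1 s] by (simp add: add.commute)
  have pointwise: "exp (V x - V w) * exp (- V t) \<le> exp (- V (t + s))" if "x < t" for t
  proof -
    have "w \<le> t + s" using that by (simp add: s_def)
    from convex_on_increment_mono[OF cv this, of "x - w"] assms
    show ?thesis by (simp add: s_def mult_exp_exp)
  qed
  have "exp (V x - V w) * tail (\<lambda>x. exp (- V x)) x
      = (LINT t:{x<..}|lborel. exp (V x - V w) * exp (- V t))"
    unfolding tail_def by simp
  also have "\<dots> \<le> (LINT t:{x<..}|lborel. exp (- V (t + s)))"
    using pointwise int int_shifted
    by (intro set_integral_mono set_integrable_lborel integrable_mult_right) auto
  finally show ?thesis
    using shifted by simp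
qed

lemma convex_small_oscillation_interval_bounded:
  fixes V :: "real \<Rightarrow> real" and k :: real
  assumes cv: "convex_on UNIV V" and int: "integrable lborel (\<lambda>x. exp (- V x))"
  obtains B where
    "\<And>y x. y < x \<Longrightarrow> (\<And>w. w \<in> {y..x} \<Longrightarrow> max (V y) (V x) \<le> V w + k)
      \<Longrightarrow> x - y \<le> B"
proof -
  obtain R where R: "0 < R" "V 0 < V R"
    using integrable_nonneg_exists_less_right[OF int, of 0] by auto
  obtain L where L: "L < 0" "V 0 < V L"
    using integrable_nonneg_exists_less_left[OF int, of 0] by auto
  define a where "a = (V R - V 0) / R"
  define b where "b = (V L - V 0) / - L"
  define M where "M = max (V L) (V R)"
  define Z where "Z = integral\<^sup>L lborel (\<lambda>x. exp (- V x))"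
  have "a > 0" "b > 0"
    using R L divide_pos_neg[of "V L - V 0" L] by (auto simp: a_def b_def)
  show thesis
  proof (rule that)
    fix y x
    assume yx: "y < x" and osc: "\<And>w. w \<in> {y..x} \<Longrightarrow> max (V y) (V x) \<le> V w + k"
    consider "R \<le> y" | "x \<le> L" | "y < R" "L < x" by linarith
    then show "x - y \<le> max (k / a) (max (k / b) (exp (M + k) * Z))"
    proof cases
      case 1
      have "a \<le> (V x - V y) / (x - y)"
        using convex_on_secant_slope_mono[OF cv, of 0 R y x] R 1 yx by (simp add: a_def)
      then have "a * (x - y) \<le> k"
        using osc[of y] yx by (simp add: le_divide_eq)
      then have "x - y \<le> k / a"
        using \<open>a > 0\<close> by (simp add: le_divide_eq mult.commute)
      then show ?thesis by (simp add: le_max_iff_disj)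
    next
      case 2
      have "(V x - V y) / (x - y) \<le> - b"
        using convex_on_secant_slope_mono[OF cv, of y x L 0] L 2 yx by (simp add: b_def minus_divide_left)
      then have "b * (x - y) \<le> k"
        using osc[of x] yx by (simp add: divide_le_eq)
      then have "x - y \<le> k / b"
        using \<open>b > 0\<close> by (simp add: le_divide_eq mult.commute)
      then show ?thesis by (simp add: le_max_iff_disj)
    next
      case 3
      define w where "w = max y L"
      have w: "w \<in> {y..x}" "w \<in> {L..R}"
        using 3 yx L R by (auto simp: w_def)
      have "V w \<le> M"
        using convex_on_le_max[OF convex_on_subset[OF cv], of L R w] w by (simp add: M_def)
      have "V t \<le> M + k" if "t \<in> {y..x}" for t
        using convex_on_le_max[OF convex_on_subset[OF cv], of y x t] that osc[OF w(1)] \<open>V w \<le> M\<close>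
        by auto
      then have "(x - y) * exp (- (M + k)) \<le> (LINT t:{y..x}|lborel. exp (- V t))"
        using yx by (intro set_integral_Icc_ge[OF int]) force+
      also have "\<dots> \<le> Z"
        unfolding Z_def by (rule set_integral_le_integral[OF int]) auto
      finally have "(x - y) * inverse (exp (M + k)) \<le> Z"
        by (simp only: exp_minus)
      then have "x - y \<le> exp (M + k) * Z"
        by (simp add: field_simps)
      then show ?thesis by (simp add: le_max_iff_disj)
    qed
  qed
qed

lemma cdf_mono:
  fixes g :: "real \<Rightarrow> real"
  assumes "integrable lborel g" "\<And>t. 0 \<le> g t" "y \<le> x"
  shows "cdf g y \<le> cdf g x"
  unfolding cdf_def using assms by (intro set_integral_mono_set) auto

lemma tail_antimono:
  fixes g :: "real \<Rightarrow> real"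
  assumes "integrable lborel g" "\<And>t. 0 \<le> g t" "y \<le> x"
  shows "tail g x \<le> tail g y"
  unfolding tail_def using assms by (intro set_integral_mono_set) auto

lemma log_concave_cdf_or_tail_gains_factor:
  fixes V :: "real \<Rightarrow> real" and K :: real
  assumes cv: "convex_on UNIV V" and int: "integrable lborel (\<lambda>x. exp (- V x))" and "0 < K"
  obtains A where "0 < A"
    "\<And>y x. y < x \<Longrightarrow> A \<le> x - y \<Longrightarrow>
      K * cdf (\<lambda>x. exp (- V x)) y < cdf (\<lambda>x. exp (- V x)) x \<or>
      K * tail (\<lambda>x. exp (- V x)) x < tail (\<lambda>x. exp (- V x)) y"
proof -
  let ?m = "\<lambda>x. exp (- V x)"
  obtain B where B: "\<And>y x. y < x \<Longrightarrow> (\<And>w. w \<in> {y..x} \<Longrightarrow> max (V y) (V x) \<le> V w + ln K)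
      \<Longrightarrow> x - y \<le> B"
    using convex_small_oscillation_interval_bounded[OF cv int] by blast
  show thesis
  proof (rule that[of "max B 0 + 1"])
    fix y x
    assume yx: "y < x" and far: "max B 0 + 1 \<le> x - y"
    show "K * cdf ?m y < cdf ?m x \<or> K * tail ?m x < tail ?m y"
    proof (rule ccontr)
      assume "\<not> ?thesis"
      then have cdf_ratio: "cdf ?m x \<le> K * cdf ?m y" and tail_ratio: "tail ?m y \<le> K * tail ?m x"
        by auto
      have "max (V y) (V x) \<le> V w + ln K" if w: "w \<in> {y..x}" for w
      proof -
        have "exp (V y - V w) * cdf ?m y \<le> K * cdf ?m y"
          using convex_cdf_shift_ge[OF cv int, of y w] cdf_mono[OF int, of w x] cdf_ratio w by simp
        then have "V y - V w \<le> ln K"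
          using convex_cdf_pos[OF cv int, of y] \<open>0 < K\<close> by (simp add: ln_ge_iff)
        moreover have "exp (V x - V w) * tail ?m x \<le> K * tail ?m x"
          using convex_tail_shift_ge[OF cv int, of w x] tail_antimono[OF int, of y w] tail_ratio w
          by simp
        then have "V x - V w \<le> ln K"
          using convex_tail_pos[OF cv int, of x] \<open>0 < K\<close> by (simp add: ln_ge_iff)
        ultimately show ?thesis by simp
      qed
      then have "x - y \<le> B"
        using B yx by blast
      with far show False by linarith
    qed
  qed simp
qed

lemma quantile_dist_le:
  assumes "p \<le> cdf f (x + A)" "\<And>z. z < x - A \<Longrightarrow> cdf f z < p"
  shows "\<bar>quantile f p - x\<bar> \<le> A"
proof -
  have lower: "x - A \<le> z" if "z \<in> {y. p \<le> cdf f y}" for z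
    using assms(2)[of z] that by fastforce
  have "quantile f p \<le> x + A"
    unfolding quantile_def by (rule cInf_lower) (use assms(1) lower in \<open>auto simp: bdd_below_def\<close>)
  moreover have "x - A \<le> quantile f p"
    unfolding quantile_def by (rule cInf_greatest) (use assms(1) lower in auto)
  ultimately show ?thesis by simp
qed

lemma ot_map_displacement_le:
  fixes m f :: "real \<Rightarrow> real"
  assumes m: "prob_density m" and f: "prob_density f"
    and lo: "\<And>t. c * m t \<le> f t" and up: "\<And>t. f t \<le> C * m t"
    and "0 < c" "C \<le> K" "1 \<le> c * K" "0 < A"
    and gain: "\<And>y x. y < x \<Longrightarrow> A \<le> x - y \<Longrightarrow> K * cdf m y < cdf m x \<or> K * tail m x < tail m y"
  shows "\<bar>ot_map m f x - x\<bar> \<le> A"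
proof -
  have mint: "integrable lborel m" and fint: "integrable lborel f" and m_nonneg: "\<And>t. 0 \<le> m t"
    and sum_m: "\<And>z. cdf m z + tail m z = 1" and sum_f: "\<And>z. cdf f z + tail f z = 1"
    using m f cdf_add_tail by (auto simp: prob_density_def)
  have cdf_nonneg: "0 \<le> cdf m z" and tail_nonneg: "0 \<le> tail m z" for z
    unfolding cdf_def tail_def using m_nonneg by (auto intro: set_integral_nonneg)
  have cdf_f_lo: "c * cdf m z \<le> cdf f z" and tail_f_lo: "c * tail m z \<le> tail f z" for z
    unfolding cdf_def tail_def using set_integral_mono_lborel[OF _ fint lo] mint by auto
  have cdf_f_up: "cdf f z \<le> C * cdf m z" and tail_f_up: "tail f z \<le> C * tail m z" for z
    unfolding cdf_def tail_def using set_integral_mono_lborel[OF fint _ up] mint by auto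
  show ?thesis
    unfolding ot_map_def comp_apply
  proof (rule quantile_dist_le)
    have "x < x + A" "A \<le> (x + A) - x" using \<open>0 < A\<close> by simp_all
    from gain[OF this] show "cdf m x \<le> cdf f (x + A)"
    proof
      assume "K * cdf m x < cdf m (x + A)"
      then have "c * K * cdf m x \<le> c * cdf m (x + A)"
        using \<open>0 < c\<close> by (simp add: mult.assoc)
      then show ?thesis
        using cdf_f_lo[of "x + A"] mult_right_mono[OF \<open>1 \<le> c * K\<close> cdf_nonneg[of x]] by linarith
    next
      assume "K * tail m (x + A) < tail m x"
      then show ?thesis
        using tail_f_up[of "x + A"] mult_right_mono[OF \<open>C \<le> K\<close> tail_nonneg[of "x + A"]]
          sum_m[of x] sum_f[of "x + A"] by linarith
    qed
  next
    fix z
    assume "z < x - A"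
    then have "z < x" "A \<le> x - z" using \<open>0 < A\<close> by auto
    from gain[OF this] show "cdf f z < cdf m x"
    proof
      assume "K * cdf m z < cdf m x"
      then show ?thesis
        using cdf_f_up[of z] mult_right_mono[OF \<open>C \<le> K\<close> cdf_nonneg[of z]] by linarith
    next
      assume "K * tail m x < tail m z"
      then have "c * K * tail m x < c * tail m z"
        using \<open>0 < c\<close> by (simp add: mult.assoc)
      then show ?thesis
        using tail_f_lo[of z] mult_right_mono[OF \<open>1 \<le> c * K\<close> tail_nonneg[of x]]
          sum_m[of x] sum_f[of z] by linarith
    qed
  qed
qed

theorem lemma2p7:
  fixes V :: "real \<Rightarrow> real" and c C :: real
  assumes "convex_on UNIV V"
    and "prob_density (\<lambda>x. exp (- V x))"
    and "0 < c" and "c < C"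
  shows "\<exists>A. \<forall>f \<in> P_cC c C (\<lambda>x. exp (- V x)).
           \<forall>x. \<bar>ot_map (\<lambda>x. exp (- V x)) f x - x\<bar> \<le> A"
proof -
  define K where "K = max C (1 / c)"
  have K_ge: "1 / c \<le> K" "C \<le> K"
    unfolding K_def by auto
  have "0 < K"
    using \<open>0 < c\<close> by (auto intro: less_le_trans[OF _ K_ge(1)])
  have "1 \<le> c * K"
    using K_ge(1) \<open>0 < c\<close> by (simp add: divide_le_eq mult.commute)
  obtain A where "0 < A" and gain: "\<And>y x. y < x \<Longrightarrow> A \<le> x - y \<Longrightarrow>
      K * cdf (\<lambda>x. exp (- V x)) y < cdf (\<lambda>x. exp (- V x)) x \<or>
      K * tail (\<lambda>x. exp (- V x)) x < tail (\<lambda>x. exp (- V x)) y"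
    using log_concave_cdf_or_tail_gains_factor[OF assms(1) _ \<open>0 < K\<close>] assms(2)
    unfolding prob_density_def by blast
  have "\<bar>ot_map (\<lambda>x. exp (- V x)) f x - x\<bar> \<le> A" if "f \<in> P_cC c C (\<lambda>x. exp (- V x))" for f x
    using that assms(2,3) K_ge \<open>1 \<le> c * K\<close> \<open>0 < A\<close>
    by (intro ot_map_displacement_le[where c = c and C = C and K = K] gain) (auto simp: P_cC_def)
  then show ?thesis by blast
qed

end
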